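(* There exist $2^{\mathfrak{c}}$ pairwise non-homeomorphic topologies $\tau\in\mathcal{L}$ such that $(\mathbb{R},\tau)$ is a Baire space which is not regular.
   Context: $\mathfrak{c}=|\mathbb{R}|$. $\eta$ denotes the Euclidean topology on $\mathbb{R}$. $\mathcal{L}$ denotes the family of all Hausdorff topologies $\tau$ on the set $\mathbb{R}$ with $\tau\subset\eta$. *)

theory Defs
  imports "HOL-Analysis.Analysis" "HOL-Library.Equipollence"
begin

definition baire_space :: "'a topology \<Rightarrow> bool" where
  "baire_space X \<longleftrightarrow>
     (\<forall>U :: nat \<Rightarrow> 'a set.
        (\<forall>n. openin X (U n) \<and> X closure_of (U n) = topspace X)
        \<longrightarrow> X closure_of (\<Inter>n. U n) = topspace X)"

text \<open>The family L: Hausdorff topologies on the set R coarser than the Euclidean topology.\<close>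
definition coarser_Hausdorff_topologies :: "real topology set" where
  "coarser_Hausdorff_topologies =
     {\<tau>. topspace \<tau> = UNIV \<and> Hausdorff_space \<tau> \<and> (\<forall>S. openin \<tau> S \<longrightarrow> open S)}"

end

theory Submission
  imports Defs
begin

(* For D a set of reals, weaken the Euclidean topology at the single point 0 by requiring
   a neighbourhood of 0 to contain, besides a ball, also a tail {M<..} - D.  Such a topology
   is Hausdorff and coarser than the Euclidean one, and every nonempty Euclidean open set
   contains the nonempty open set U - {0}; so both topologies have the same dense sets and
   it is a Baire space.  If D contains the positive integers, each of them a limit of points
   outside D, then 0 cannot be separated from this closed set: the topology is not regular.

   Taking D = {n + h | n >= 1, h in {0} \<union> A} for A a subset of (1/2, 1) yields 2^c distinct
   topologies, since a is in A iff the complement of {n + a | n >= 1} is open.  A homeomorphism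
   between two members of L is continuous from the Euclidean topology into a Hausdorff space,
   hence determined by its values on the rationals, and it determines its domain topology;
   so a homeomorphism class in L has at most c members, and a choice of one member per class
   still leaves 2^c topologies. *)

section \<open>Cardinal arithmetic\<close>

lemma infinite_times_self_eqpoll: "infinite A \<Longrightarrow> A \<times> A \<approx> A"
  using card_of_Times_same_infinite eqpoll_iff_card_of_ordIso by blast

lemma lepoll_total: "A \<lesssim> B \<or> B \<lesssim> A"
  using ordLeq_total[OF card_of_Well_order card_of_Well_order, of A B]
  by (simp add: lepoll_def card_of_ordLeq[symmetric])

lemma Union_lepoll_Times:
  assumes "\<And>C. C \<in> Q \<Longrightarrow> C \<lesssim> X"
  shows "\<Union>Q \<lesssim> Q \<times> X"
proof -
  have "(\<Union>C\<in>Q. C) \<lesssim> (\<Union>C\<in>Q. {C} \<times> X)"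
  proof (rule UN_lepoll_UN)
    show "C \<lesssim> {C} \<times> X" if "C \<in> Q" for C
      using assms[OF that] eqpoll_sym[OF times_singleton_eqpoll] by (rule lepoll_trans2)
    show "pairwise (\<lambda>C C'. disjnt ({C} \<times> X) ({C'} \<times> X)) Q"
      by (auto simp: pairwise_def disjnt_def)
  qed
  moreover have "(\<Union>C\<in>Q. {C} \<times> X) = Q \<times> X"
    by blast
  ultimately show ?thesis
    by simp
qed

lemma quotient_eqpoll_Pow:
  assumes r: "equiv G r" and X: "infinite X" and G: "G \<approx> Pow X"
    and small: "\<And>x. x \<in> G \<Longrightarrow> r `` {x} \<lesssim> X"
  shows "G // r \<approx> Pow X"
proof (rule lepoll_antisym)
  have "G // r = (\<lambda>x. r `` {x}) ` G"
    by (auto simp: quotient_def)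
  then have "G // r \<lesssim> G"
    by (metis image_lepoll)
  then show "G // r \<lesssim> Pow X"
    using G by (rule lepoll_trans2)
  have "\<Union>(G // r) \<lesssim> G // r \<times> X"
    using small by (intro Union_lepoll_Times) (auto elim: quotientE)
  then have "G \<lesssim> G // r \<times> X"
    by (simp only: Union_quotient[OF r])
  with G have PowX: "Pow X \<lesssim> G // r \<times> X"
    by (rule lepoll_trans1[OF eqpoll_sym])
  consider "G // r \<lesssim> X" | "X \<lesssim> G // r"
    using lepoll_total by blast
  then show "Pow X \<lesssim> G // r"
  proof cases
    case 1
    note PowX
    also have "G // r \<times> X \<lesssim> X \<times> X"
      using 1 lepoll_refl by (rule times_lepoll_mono)
    also have "\<dots> \<approx> X"
      using X by (rule infinite_times_self_eqpoll)
    finally have "Pow X \<lesssim> X" .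
    then show ?thesis
      using lesspoll_Pow_self[of X] lepoll_antisym lesspoll_def by blast
  next
    case 2
    have "infinite (G // r)"
      using X 2 by (metis infinite_le_lepoll lepoll_trans)
    note PowX
    also have "G // r \<times> X \<lesssim> G // r \<times> G // r"
      using lepoll_refl 2 by (rule times_lepoll_mono)
    also have "\<dots> \<approx> G // r"
      using \<open>infinite (G // r)\<close> by (rule infinite_times_self_eqpoll)
    finally show ?thesis .
  qed
qed

lemma equiv_representatives_eqpoll_Pow:
  assumes r: "equiv G r" and "infinite X" "G \<approx> Pow X"
    and "\<And>x. x \<in> G \<Longrightarrow> r `` {x} \<lesssim> X"
  shows "\<exists>F \<subseteq> G. F \<approx> Pow X \<and> (\<forall>x\<in>F. \<forall>y\<in>F. (x, y) \<in> r \<longrightarrow> x = y)"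
proof -
  define rep where "rep C = (SOME x. x \<in> C)" for C :: "'a set"
  have rep: "rep C \<in> C" if "C \<in> G // r" for C
    unfolding rep_def using in_quotient_imp_non_empty[OF r that] by (simp add: some_in_eq)
  have same_class: "C = C'" if "C \<in> G // r" "C' \<in> G // r" "(rep C, rep C') \<in> r" for C C'
    using quotient_eqI[OF r that(1,2) rep[OF that(1)] rep[OF that(2)] that(3)] .
  have "inj_on rep (G // r)"
  proof (rule inj_onI)
    fix C C' assume C: "C \<in> G // r" and C': "C' \<in> G // r" and "rep C = rep C'"
    then have "rep C \<in> C \<inter> C'"
      using rep[OF C] rep[OF C'] by simp
    then show "C = C'"
      using quotient_disj[OF r C C'] by blast
  qed
  then have "rep ` (G // r) \<approx> Pow X"
    using quotient_eqpoll_Pow[OF assms] eqpoll_trans inj_on_image_eqpoll_self by blast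
  moreover have "rep ` (G // r) \<subseteq> G"
    using rep in_quotient_imp_subset[OF r] by blast
  moreover have "x = y" if "x \<in> rep ` (G // r)" "y \<in> rep ` (G // r)" "(x, y) \<in> r" for x y
    using that same_class by blast
  ultimately show ?thesis
    by blast
qed

lemma countable_funcset_reals_lepoll:
  assumes "countable D"
  shows "D \<rightarrow>\<^sub>E (UNIV :: real set) \<lesssim> (UNIV :: real set)"
proof -
  obtain e :: "real \<Rightarrow> nat set" where e: "inj e"
    using nat_sets_eqpoll_reals by (meson eqpoll_sym eqpoll_imp_lepoll lepoll_def)
  have graph_inj: "inj (\<lambda>h :: nat \<Rightarrow> real. {(n, m). m \<in> e (h n)})"
  proof (rule injI)
    fix h h' :: "nat \<Rightarrow> real"
    assume "{(n, m). m \<in> e (h n)} = {(n, m). m \<in> e (h' n)}"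
    then have "e (h n) = e (h' n)" for n
      by (simp add: set_eq_iff)
    then show "h = h'"
      using e by (simp add: inj_eq fun_eq_iff)
  qed
  have "D \<rightarrow>\<^sub>E (UNIV :: real set) \<lesssim> (UNIV :: nat set) \<rightarrow>\<^sub>E (UNIV :: real set)"
    using assms by (intro lepoll_funcset_left) (auto simp: countable_def lepoll_def)
  also have "\<dots> \<lesssim> Pow (UNIV :: (nat \<times> nat) set)"
    using graph_inj by (auto simp: lepoll_def)
  also have "\<dots> \<approx> Pow (UNIV :: nat set)"
    using bij_betw_image_Pow[OF bij_prod_encode] eqpoll_def by blast
  also have "\<dots> \<approx> (UNIV :: real set)"
    using nat_sets_eqpoll_reals by simp
  finally show ?thesis .
qed

lemma non_homeomorphic_subset_eqpoll_Pow:
  assumes X: "infinite X" and G: "G \<approx> Pow X"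
    and small: "\<And>\<sigma>. \<sigma> \<in> G \<Longrightarrow> {\<rho> \<in> G. \<rho> homeomorphic_space \<sigma>} \<lesssim> X"
  shows "\<exists>F \<subseteq> G. F \<approx> Pow X \<and> (\<forall>\<tau>\<in>F. \<forall>\<sigma>\<in>F. \<tau> \<noteq> \<sigma> \<longrightarrow> \<not> \<tau> homeomorphic_space \<sigma>)"
proof -
  define r where "r = {(\<sigma>, \<rho>). \<sigma> \<in> G \<and> \<rho> \<in> G \<and> \<sigma> homeomorphic_space \<rho>}"
  have r: "equiv G r"
  proof (rule equivI)
    show "r \<subseteq> G \<times> G" "refl_on G r"
      by (auto simp: r_def refl_on_def)
    show "sym r"
      by (auto simp: r_def sym_def intro: homeomorphic_space_sym[THEN iffD1])
    show "trans r"
      by (auto simp: r_def trans_def intro: homeomorphic_space_trans)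
  qed
  have "r `` {\<sigma>} = {\<rho> \<in> G. \<rho> homeomorphic_space \<sigma>}" if "\<sigma> \<in> G" for \<sigma>
    using that by (auto simp: r_def intro: homeomorphic_space_sym[THEN iffD1])
  then have "r `` {\<sigma>} \<lesssim> X" if "\<sigma> \<in> G" for \<sigma>
    using small that by simp
  then obtain F where "F \<subseteq> G" "F \<approx> Pow X" and "\<forall>\<tau>\<in>F. \<forall>\<sigma>\<in>F. (\<tau>, \<sigma>) \<in> r \<longrightarrow> \<tau> = \<sigma>"
    using equiv_representatives_eqpoll_Pow[OF r X G] by blast
  then show ?thesis
    unfolding r_def by blast
qed

section \<open>Homeomorphism classes of coarser topologies\<close>

lemma homeomorphic_coarser_topologies_lepoll:
  fixes X :: "'a topology" and Y :: "'b topology"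
  assumes Y: "Hausdorff_space Y" and D: "D \<subseteq> topspace X" "X closure_of D = topspace X"
  shows "{\<sigma>. topspace \<sigma> = topspace X \<and> (\<forall>U. openin \<sigma> U \<longrightarrow> openin X U) \<and> \<sigma> homeomorphic_space Y}
           \<lesssim> D \<rightarrow>\<^sub>E topspace Y" (is "?S \<lesssim> _")
proof -
  define f :: "'a topology \<Rightarrow> 'a \<Rightarrow> 'b"
    where "f \<sigma> = (SOME f. homeomorphic_map \<sigma> Y f)" for \<sigma>
  have hom: "homeomorphic_map \<sigma> Y (f \<sigma>)" if "\<sigma> \<in> ?S" for \<sigma>
  proof -
    have "\<exists>f. homeomorphic_map \<sigma> Y f"
      using that homeomorphic_space by blast
    then show ?thesis
      unfolding f_def by (rule someI_ex)
  qed
  have cont: "continuous_map X Y (f \<sigma>)" if "\<sigma> \<in> ?S" for \<sigma>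
    using homeomorphic_imp_continuous_map[OF hom[OF that]] that
    by (simp add: continuous_map_def)
  have "inj_on (\<lambda>\<sigma>. restrict (f \<sigma>) D) ?S"
  proof (rule inj_onI)
    fix \<sigma> \<rho> assume \<sigma>: "\<sigma> \<in> ?S" and \<rho>: "\<rho> \<in> ?S"
      and eq: "restrict (f \<sigma>) D = restrict (f \<rho>) D"
    have "f \<sigma> x = f \<rho> x" if "x \<in> topspace X" for x
    proof (rule forall_in_closure_of_eq[OF _ Y cont[OF \<sigma>] cont[OF \<rho>]])
      show "x \<in> X closure_of D"
        using that D(2) by simp
      show "f \<sigma> y = f \<rho> y" if "y \<in> D" for y
        using fun_cong[OF eq, of y] that by simp
    qed
    then have "f \<sigma> ` U = f \<rho> ` U" if "U \<subseteq> topspace X" for U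
      using that by (simp add: subset_iff cong: image_cong)
    moreover have "topspace \<sigma> = topspace X" "topspace \<rho> = topspace X"
      using \<sigma> \<rho> by simp_all
    ultimately have "openin \<sigma> U \<longleftrightarrow> openin \<rho> U" for U
      unfolding homeomorphic_map_openness_eq[OF hom[OF \<sigma>]] homeomorphic_map_openness_eq[OF hom[OF \<rho>]]
      by (cases "U \<subseteq> topspace X") auto
    then show "\<sigma> = \<rho>"
      by (simp add: topology_eq)
  qed
  moreover have "f \<sigma> x \<in> topspace Y" if "\<sigma> \<in> ?S" "x \<in> D" for \<sigma> x
    using continuous_map_image_subset_topspace[OF cont[OF that(1)]] that(2) D(1) by blast
  then have "(\<lambda>\<sigma>. restrict (f \<sigma>) D) ` ?S \<subseteq> D \<rightarrow>\<^sub>E topspace Y"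
    by auto
  ultimately show ?thesis
    unfolding lepoll_def by blast
qed

lemma homeomorphism_class_lepoll_reals:
  assumes "\<sigma> \<in> coarser_Hausdorff_topologies"
  shows "{\<rho> \<in> coarser_Hausdorff_topologies. \<rho> homeomorphic_space \<sigma>} \<lesssim> (UNIV :: real set)"
proof -
  have \<sigma>: "Hausdorff_space \<sigma>" "topspace \<sigma> = UNIV"
    using assms by (simp_all add: coarser_Hausdorff_topologies_def)
  have "{\<rho> \<in> coarser_Hausdorff_topologies. \<rho> homeomorphic_space \<sigma>} \<lesssim>
      {\<rho>. topspace \<rho> = topspace euclideanreal \<and> (\<forall>U. openin \<rho> U \<longrightarrow> openin euclideanreal U)
        \<and> \<rho> homeomorphic_space \<sigma>}"
    by (rule subset_imp_lepoll) (auto simp: coarser_Hausdorff_topologies_def)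
  also have "\<dots> \<lesssim> (\<rat> :: real set) \<rightarrow>\<^sub>E topspace \<sigma>"
  proof (rule homeomorphic_coarser_topologies_lepoll[OF \<sigma>(1)])
    show "euclideanreal closure_of \<rat> = topspace euclideanreal"
      by (simp add: Rats_closure_real)
  qed simp
  also have "\<dots> \<lesssim> (UNIV :: real set)"
    unfolding \<sigma>(2) using countable_rat by (rule countable_funcset_reals_lepoll)
  finally show ?thesis .
qed

lemma baire_space_euclideanreal: "baire_space euclideanreal"
  unfolding baire_space_def
proof (intro allI impI)
  fix U :: "nat \<Rightarrow> real set"
  assume "\<forall>n. openin euclideanreal (U n) \<and> euclideanreal closure_of U n = topspace euclideanreal"
  then have "UNIV \<subseteq> closure (\<Inter>(range U))"
    by (intro Baire) auto
  then show "euclideanreal closure_of (\<Inter>n. U n) = topspace euclideanreal"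
    by auto
qed

lemma baire_space_coarser:
  assumes X: "baire_space X"
    and coarser: "\<And>U. openin Y U \<Longrightarrow> openin X U"
    and dense_opens: "\<And>U. openin X U \<Longrightarrow> U \<noteq> {} \<Longrightarrow> \<exists>V. openin Y V \<and> V \<noteq> {} \<and> V \<subseteq> U"
  shows "baire_space Y"
proof -
  have dense_iff: "Y closure_of S = topspace Y \<longleftrightarrow> X closure_of S = topspace X" for S
    unfolding dense_intersects_open
  proof
    assume Y: "\<forall>V. openin Y V \<and> V \<noteq> {} \<longrightarrow> S \<inter> V \<noteq> {}"
    show "\<forall>U. openin X U \<and> U \<noteq> {} \<longrightarrow> S \<inter> U \<noteq> {}"
    proof (intro allI impI)
      fix U assume "openin X U \<and> U \<noteq> {}"
      then obtain V where "openin Y V" "V \<noteq> {}" "V \<subseteq> U"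
        using dense_opens by blast
      then show "S \<inter> U \<noteq> {}"
        using Y by blast
    qed
  next
    assume "\<forall>U. openin X U \<and> U \<noteq> {} \<longrightarrow> S \<inter> U \<noteq> {}"
    then show "\<forall>V. openin Y V \<and> V \<noteq> {} \<longrightarrow> S \<inter> V \<noteq> {}"
      using coarser by blast
  qed
  show ?thesis
    unfolding baire_space_def dense_iff
  proof (intro allI impI)
    fix U :: "nat \<Rightarrow> _"
    assume "\<forall>n. openin Y (U n) \<and> X closure_of U n = topspace X"
    then have "\<forall>n. openin X (U n) \<and> X closure_of U n = topspace X"
      using coarser by blast
    then show "X closure_of (\<Inter>n. U n) = topspace X"
      using X unfolding baire_space_def by blast
  qed
qed

section \<open>Topologies weakened at the origin\<close>

definition tail_topology :: "real set \<Rightarrow> real topology" where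
  "tail_topology D = topology (\<lambda>U. open U \<and> (0 \<in> U \<longrightarrow> (\<exists>M. {M<..} - D \<subseteq> U)))"

lemma openin_tail_topology:
  "openin (tail_topology D) U \<longleftrightarrow> open U \<and> (0 \<in> U \<longrightarrow> (\<exists>M. {M<..} - D \<subseteq> U))"
proof -
  have "istopology (\<lambda>U. open U \<and> (0 \<in> U \<longrightarrow> (\<exists>M. {M<..} - D \<subseteq> U)))"
    unfolding istopology_def
  proof (intro conjI allI impI)
    fix S T
    assume S: "open S \<and> (0 \<in> S \<longrightarrow> (\<exists>M. {M<..} - D \<subseteq> S))"
      and T: "open T \<and> (0 \<in> T \<longrightarrow> (\<exists>M. {M<..} - D \<subseteq> T))"
    then show "open (S \<inter> T)"
      by (simp add: open_Int)
    assume "0 \<in> S \<inter> T"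
    then obtain M N where "{M<..} - D \<subseteq> S" "{N<..} - D \<subseteq> T"
      using S T by blast
    then show "\<exists>M. {M<..} - D \<subseteq> S \<inter> T"
      by (intro exI[of _ "max M N"]) auto
  next
    fix \<K> assume \<K>: "\<forall>S\<in>\<K>. open S \<and> (0 \<in> S \<longrightarrow> (\<exists>M. {M<..} - D \<subseteq> S))"
    then show "open (\<Union>\<K>)"
      by (simp add: open_Union)
    assume "0 \<in> \<Union>\<K>"
    then obtain S M where "S \<in> \<K>" "{M<..} - D \<subseteq> S"
      using \<K> by blast
    then show "\<exists>M. {M<..} - D \<subseteq> \<Union>\<K>"
      by blast
  qed
  then show ?thesis
    by (simp add: tail_topology_def)
qed

lemma topspace_tail_topology [simp]: "topspace (tail_topology D) = UNIV"
  unfolding topspace_def openin_tail_topology by blast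

lemma open_if_openin_tail_topology: "openin (tail_topology D) U \<Longrightarrow> open U"
  by (simp add: openin_tail_topology)

lemma openin_tail_topology_Compl:
  assumes "closed P" "0 \<notin> P"
  shows "openin (tail_topology D) (- P) \<longleftrightarrow> (\<exists>M. P \<inter> {M<..} \<subseteq> D)"
  using assms by (auto simp: openin_tail_topology)

lemma Hausdorff_space_tail_topology: "Hausdorff_space (tail_topology D)"
proof -
  have from_0: "\<exists>U V. openin (tail_topology D) U \<and> openin (tail_topology D) V \<and> 0 \<in> U \<and> y \<in> V \<and> disjnt U V"
    if "y \<noteq> 0" for y
  proof (intro exI conjI)
    define r where "r = \<bar>y\<bar> / 2"
    show "openin (tail_topology D) (ball 0 r \<union> {\<bar>y\<bar> + r<..})"
      unfolding openin_tail_topology by auto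
    show "openin (tail_topology D) (ball y r)"
      using that by (auto simp: openin_tail_topology r_def)
    show "disjnt (ball 0 r \<union> {\<bar>y\<bar> + r<..}) (ball y r)"
      by (auto simp: disjnt_def dist_real_def r_def abs_if split: if_splits)
  qed (use that in auto)
  have away_from_0: "\<exists>U V. openin (tail_topology D) U \<and> openin (tail_topology D) V \<and> x \<in> U \<and> y \<in> V \<and> disjnt U V"
    if "x \<noteq> 0" "y \<noteq> 0" "x \<noteq> y" for x y
  proof (intro exI conjI)
    define r where "r = dist x y / 2"
    show "openin (tail_topology D) (ball x r - {0})" "openin (tail_topology D) (ball y r - {0})"
      by (auto simp: openin_tail_topology)
    show "disjnt (ball x r - {0}) (ball y r - {0})"
      using disjoint_ballI[of r r x y] by (auto simp: disjnt_def r_def)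
  qed (use that in auto)
  show ?thesis
    unfolding Hausdorff_space_def
    using from_0 away_from_0 by (metis disjnt_sym)
qed

lemma baire_space_tail_topology: "baire_space (tail_topology D)"
proof (rule baire_space_coarser[OF baire_space_euclideanreal])
  show "openin euclideanreal U" if "openin (tail_topology D) U" for U
    using that by (simp add: open_if_openin_tail_topology)
  show "\<exists>V. openin (tail_topology D) V \<and> V \<noteq> {} \<and> V \<subseteq> U"
    if "openin euclideanreal U" "U \<noteq> {}" for U
  proof (intro exI conjI)
    show "openin (tail_topology D) (U - {0})"
      using that by (auto simp: openin_tail_topology)
    show "U - {0} \<noteq> {}"
      using that not_open_singleton by (metis Diff_eq_empty_iff open_openin subset_singletonD)
  qed auto
qed

lemma not_regular_space_tail_topology:
  assumes C: "closed C" "0 \<notin> C" "C \<subseteq> D" "C \<subseteq> closure (- D)"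
    and unbounded: "\<And>M. \<exists>c\<in>C. M < c"
  shows "\<not> regular_space (tail_topology D)"
proof
  assume "regular_space (tail_topology D)"
  moreover have "closedin (tail_topology D) C"
    using C by (auto simp: closedin_def openin_tail_topology_Compl Compl_eq_Diff_UNIV[symmetric])
  ultimately obtain U V where UV: "openin (tail_topology D) U" "openin (tail_topology D) V"
      "0 \<in> U" "C \<subseteq> V" "disjnt U V"
    using C(2) unfolding regular_space_def by (metis Diff_iff UNIV_I topspace_tail_topology)
  then obtain M where M: "{M<..} - D \<subseteq> U"
    by (auto simp: openin_tail_topology)
  obtain c where c: "c \<in> C" "M < c"
    using unbounded by blast
  have "open (V \<inter> {M<..})"
    using UV(2) by (simp add: open_Int open_if_openin_tail_topology)
  moreover have "c \<in> V \<inter> {M<..}" "c \<in> closure (- D)"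
    using c UV(4) C(4) by auto
  ultimately have "V \<inter> {M<..} \<inter> - D \<noteq> {}"
    using open_Int_closure_eq_empty by blast
  then show False
    using M UV(5) by (auto simp: disjnt_def)
qed

section \<open>Encoding sets of reals by marked integer translates\<close>

lemma closed_nat_translates: "closed {real n + c | n::nat. 0 < n}"
proof (rule discrete_imp_closed[of 1])
  show "\<forall>x\<in>{real n + c | n::nat. 0 < n}. \<forall>y\<in>{real n + c | n::nat. 0 < n}. dist y x < 1 \<longrightarrow> y = x"
    by (auto simp: dist_real_def)
qed simp

lemma nat_translates_unbounded:
  assumes "0 \<le> c"
  shows "\<exists>n::nat. 0 < n \<and> M < real n + c"
proof -
  obtain n :: nat where "max M 0 < real n"
    using reals_Archimedean2 by blast
  then show ?thesis
    using assms by (intro exI[of _ n]) auto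
qed

definition marks :: "real set \<Rightarrow> real set" where
  "marks A = {real n + h | n h. 0 < n \<and> h \<in> insert 0 A}"

lemma nat_add_frac_eq_iff:
  assumes "0 \<le> h" "h < 1" "0 \<le> h'" "h' < 1"
  shows "real n + h = real m + h' \<longleftrightarrow> n = m \<and> h = h'"
proof
  assume eq: "real n + h = real m + h'"
  moreover have "\<lfloor>real n + h\<rfloor> = int n" "\<lfloor>real m + h'\<rfloor> = int m"
    using assms by (simp_all add: floor_eq_iff)
  ultimately have "n = m"
    by simp
  then show "n = m \<and> h = h'"
    using eq by simp
qed simp

lemma nat_add_frac_mem_marks:
  assumes A: "A \<subseteq> {0<..<1}" and h: "0 \<le> h" "h < 1"
  shows "real n + h \<in> marks A \<longleftrightarrow> 0 < n \<and> h \<in> insert 0 A"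
proof
  assume "real n + h \<in> marks A"
  then obtain m h' where eq: "real n + h = real m + h'" and m: "0 < m" "h' \<in> insert 0 A"
    unfolding marks_def by blast
  have "0 \<le> h'" "h' < 1"
    using m(2) A by auto
  then have "n = m \<and> h = h'"
    using nat_add_frac_eq_iff[OF h] eq by blast
  then show "0 < n \<and> h \<in> insert 0 A"
    using m by simp
qed (auto simp: marks_def)

lemma openin_tail_topology_marks_iff:
  assumes A: "A \<subseteq> {0<..<1}" and a: "0 < a" "a < 1"
  shows "openin (tail_topology (marks A)) (- {real n + a | n. 0 < n}) \<longleftrightarrow> a \<in> A"
proof -
  have "0 \<notin> {real n + a | n. 0 < n}"
    using a by auto
  then have "openin (tail_topology (marks A)) (- {real n + a | n. 0 < n}) \<longleftrightarrow>
      (\<exists>M. {real n + a | n. 0 < n} \<inter> {M<..} \<subseteq> marks A)"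
    by (intro openin_tail_topology_Compl closed_nat_translates)
  also have "\<dots> \<longleftrightarrow> a \<in> A"
  proof
    assume "\<exists>M. {real n + a | n. 0 < n} \<inter> {M<..} \<subseteq> marks A"
    then obtain M where M: "{real n + a | n. 0 < n} \<inter> {M<..} \<subseteq> marks A"
      by blast
    obtain n :: nat where "0 < n" "M < real n + a"
      using nat_translates_unbounded a by (meson less_imp_le)
    then have "real n + a \<in> marks A"
      using M by blast
    then show "a \<in> A"
      using nat_add_frac_mem_marks[OF A] a by auto
  next
    assume "a \<in> A"
    then show "\<exists>M. {real n + a | n. 0 < n} \<inter> {M<..} \<subseteq> marks A"
      by (auto simp: marks_def)
  qed
  finally show ?thesis .
qed

lemma inj_on_tail_topology_marks: "inj_on (\<lambda>A. tail_topology (marks A)) (Pow {0<..<1})"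
proof (rule inj_onI)
  fix A B assume A: "A \<in> Pow {0<..<1}" and B: "B \<in> Pow {0<..<1}"
    and eq: "tail_topology (marks A) = tail_topology (marks B)"
  have "a \<in> A \<longleftrightarrow> a \<in> B" if "0 < a" "a < 1" for a
    using openin_tail_topology_marks_iff[of A a] openin_tail_topology_marks_iff[of B a] A B eq that
    by simp
  then show "A = B"
    using A B by auto
qed

lemma not_regular_space_tail_topology_marks:
  assumes A: "A \<subseteq> {1/2<..<1}"
  shows "\<not> regular_space (tail_topology (marks A))"
proof (rule not_regular_space_tail_topology)
  let ?C = "{real n + 0 | n::nat. 0 < n}"
  show "closed ?C"
    by (rule closed_nat_translates)
  show "0 \<notin> ?C" "\<And>M. \<exists>c\<in>?C. M < c"
    using nat_translates_unbounded[of 0] by auto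
  have A01: "A \<subseteq> {0<..<1}"
    using A by auto
  show "?C \<subseteq> marks A"
    unfolding marks_def by blast
  show "?C \<subseteq> closure (- marks A)"
  proof clarify
    fix n :: nat assume "0 < n"
    have "{real n<..<real n + 1/2} \<subseteq> - marks A"
    proof
      fix x assume x: "x \<in> {real n<..<real n + 1/2}"
      then have "x - real n \<notin> insert 0 A"
        using A by auto
      then show "x \<in> - marks A"
        using nat_add_frac_mem_marks[OF A01, of "x - real n" n] x by auto
    qed
    then have "closure {real n<..<real n + 1/2} \<subseteq> closure (- marks A)"
      by (rule closure_mono)
    then show "real n + 0 \<in> closure (- marks A)"
      by auto
  qed
qed

lemma tail_topologies_marks_eqpoll:
  "(\<lambda>A. tail_topology (marks A)) ` Pow {1/2<..<1} \<approx> Pow (UNIV :: real set)"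
proof -
  have "inj_on (\<lambda>A. tail_topology (marks A)) (Pow {1/2<..<1})"
    by (rule inj_on_subset[OF inj_on_tail_topology_marks]) auto
  then have "(\<lambda>A. tail_topology (marks A)) ` Pow {1/2<..<1} \<approx> Pow {1/2<..<1 :: real}"
    by (rule inj_on_image_eqpoll_self)
  also obtain f :: "real \<Rightarrow> real" where "bij_betw f UNIV {1/2<..<1}"
    using open_interval_eqpoll_reals[of "1/2" 1] eqpoll_sym unfolding eqpoll_def by auto
  then have "Pow {1/2<..<1 :: real} \<approx> Pow (UNIV :: real set)"
    using bij_betw_image_Pow eqpoll_def eqpoll_sym by blast
  finally show ?thesis .
qed

theorem theorem2:
  shows "\<exists>F :: real topology set.
           F \<approx> (UNIV :: real set set) \<and>
           F \<subseteq> coarser_Hausdorff_topologies \<and>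
           (\<forall>\<tau>\<in>F. baire_space \<tau> \<and> \<not> regular_space \<tau>) \<and>
           (\<forall>\<tau>\<in>F. \<forall>\<sigma>\<in>F. \<tau> \<noteq> \<sigma> \<longrightarrow> \<not> (\<tau> homeomorphic_space \<sigma>))"
proof -
  define G where "G = (\<lambda>A. tail_topology (marks A)) ` Pow {1/2<..<1}"
  have G_coarser: "G \<subseteq> coarser_Hausdorff_topologies"
    by (auto simp: G_def coarser_Hausdorff_topologies_def Hausdorff_space_tail_topology
        open_if_openin_tail_topology)
  have "{\<rho> \<in> G. \<rho> homeomorphic_space \<sigma>} \<lesssim> (UNIV :: real set)" if "\<sigma> \<in> G" for \<sigma>
  proof (rule lepoll_trans[OF subset_imp_lepoll])
    show "{\<rho> \<in> G. \<rho> homeomorphic_space \<sigma>} \<subseteq> {\<rho> \<in> coarser_Hausdorff_topologies. \<rho> homeomorphic_space \<sigma>}"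
      using G_coarser by blast
    show "{\<rho> \<in> coarser_Hausdorff_topologies. \<rho> homeomorphic_space \<sigma>} \<lesssim> (UNIV :: real set)"
      using G_coarser that by (intro homeomorphism_class_lepoll_reals) blast
  qed
  then obtain F where F: "F \<subseteq> G" "F \<approx> Pow (UNIV :: real set)"
    and F_non_homeomorphic: "\<forall>\<tau>\<in>F. \<forall>\<sigma>\<in>F. \<tau> \<noteq> \<sigma> \<longrightarrow> \<not> \<tau> homeomorphic_space \<sigma>"
    using non_homeomorphic_subset_eqpoll_Pow[OF infinite_UNIV_char_0, of G]
      tail_topologies_marks_eqpoll unfolding G_def by blast
  have "baire_space \<tau> \<and> \<not> regular_space \<tau>" if "\<tau> \<in> G" for \<tau>
    using that by (auto simp: G_def baire_space_tail_topology not_regular_space_tail_topology_marks)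
  then show ?thesis
    using F F_non_homeomorphic G_coarser by (intro exI[of _ F]) auto
qed

end
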